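(* Let $L\ge 1$ be an integer, $b_0>0$, $\alpha>0$, $\beta\ge 0$, $\nu>0$. Consider two distinct columns $j\neq j'$ and two (possibly equal) row indices $i,i'$ of a data matrix, modelled as follows. The column-cluster labels $C_j, C_{j'}\in\{1,2,\dots\}$ follow the BNP-MRF prior with weights $\boldsymbol{\pi}\sim\mathrm{GEM}(\alpha)$ and inverse temperature $\beta$, in the two-column case, so that $\mathbb{P}[C_j=C_{j'}]=e^{\beta}/(\alpha+e^{\beta})$. Independently of $(\boldsymbol{\pi},C_j,C_{j'})$, for every column cluster $k$ there is a vector of weights $\boldsymbol{\omega}_k$ (the $\boldsymbol{\omega}_k$ being i.i.d. across $k$), and given $\boldsymbol{\omega}_k$ the row-cluster labels $R_{1,k},R_{2,k},\dots$ are i.i.d. with $\mathbb{P}[R_{i,k}=l\mid\boldsymbol{\omega}_k]=\omega_{l,k}$. Atoms $\theta^*_1,\theta^*_2,\dots$ are i.i.d. from a diffuse distribution $H$, independent of everything else, and $\theta_{i,j}:=\theta^*_{R_{i,C_j}}$. (a) If $\boldsymbol{\omega}_k\sim\mathrm{Dirichlet}_L(b_0,\dots,b_0)$ for all $k$ (so $l\in\{1,\dots,L\}$), then $$\mathbb{P}[\theta_{i,j}=\theta_{i',j'}]=\frac{1}{\alpha+e^{\beta}}\left[e^{\beta}\left(\frac{1+b_0}{1+Lb_0}\right)^{1-\mathds{1}_{i=i'}}+\frac{\alpha}{L}\right].$$ (b) If instead $\boldsymbol{\omega}_k\sim\mathrm{GEM}(\nu)$ for all $k$ (so $l\in\{1,2,\dots\}$),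 then $$\mathbb{P}[\theta_{i,j}=\theta_{i',j'}]=\frac{1}{\alpha+e^{\beta}}\left[e^{\beta}\left(\frac{1}{1+\nu}\right)^{1-\mathds{1}_{i=i'}}+\frac{\alpha}{2\nu+1}\right].$$
   Context: $\mathrm{GEM}(a)$ denotes the stick-breaking distribution: $\pi_1=v_1$, $\pi_k=v_k\prod_{g<k}(1-v_g)$ with $v_g\overset{iid}{\sim}\mathrm{Beta}(1,a)$. The BNP-MRF prior on column labels $\boldsymbol{C}=(C_1,\dots,C_J)$ given $\boldsymbol{\pi}$ and $\beta$ has joint density proportional to $\left(\prod_{j}\pi_{C_j}\right)\exp\!\left[\beta\sum_{j}\sum_{q\in\partial_j}\mathds{1}_{\{C_q=C_j\}}\right]$, where $\partial_j$ is the set of neighbours of column (pixel) $j$; in the two-column case considered here its probability of a tie is $\mathbb{P}[C_j=C_{j'}]=e^{\beta}/(\alpha+e^{\beta})$. This is the "Pose" model: entries in column cluster $k$ and row $i$ share the row-cluster label $R_{i,k}$, and atoms $\theta^*_l$ are shared across column clusters. $\mathds{1}_{i=i'}$ equals $1$ if $i=i'$ and $0$ otherwise. *)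

theory Defs
  imports "HOL-Probability.Probability"
begin

text \<open>Measurable space of weight vectors (indexed by labels l = 1, 2, ...;
  coordinate 0 and coordinates beyond the support are unused / zero).\<close>
definition omega_space :: "(nat \<Rightarrow> real) measure" where
  "omega_space = (\<Pi>\<^sub>M l\<in>(UNIV::nat set). (borel :: real measure))"

definition gamma_density :: "real \<Rightarrow> real \<Rightarrow> real" where
  "gamma_density a x = (if 0 < x then x powr (a - 1) * exp (- x) / Gamma a else 0)"

definition beta_density :: "real \<Rightarrow> real \<Rightarrow> real \<Rightarrow> real" where
  "beta_density a b x =
     (if 0 < x \<and> x < 1 then x powr (a - 1) * (1 - x) powr (b - 1) / Beta a b else 0)"

definition dirichlet_measure :: "nat \<Rightarrow> real \<Rightarrow> (nat \<Rightarrow> real) measure" where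
  "dirichlet_measure L b0 =
     distr (\<Pi>\<^sub>M l\<in>{1..L}. density lborel (gamma_density b0)) omega_space
       (\<lambda>g l. if l \<in> {1..L} then g l / (\<Sum>m\<in>{1..L}. g m) else 0)"

definition stick_break :: "(nat \<Rightarrow> real) \<Rightarrow> nat \<Rightarrow> real" where
  "stick_break v l = (if 1 \<le> l then v l * (\<Prod>g\<in>{1..<l}. (1 - v g)) else 0)"

definition gem_measure :: "real \<Rightarrow> (nat \<Rightarrow> real) measure" where
  "gem_measure a =
     distr (\<Pi>\<^sub>M g\<in>(UNIV::nat set). density lborel (beta_density 1 a)) omega_space
       stick_break"

text \<open>The sigma-algebras of the independent blocks of the model:
  Inl () : the column labels (C j, C j');
  Inr (Inl k) : the weights omega_k together with all row labels R i k of column cluster k;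
  Inr (Inr l) : the atom theta*_l.\<close>
definition model_blocks ::
  "'a measure \<Rightarrow> (nat \<Rightarrow> 'a \<Rightarrow> nat) \<Rightarrow> nat \<Rightarrow> nat \<Rightarrow> (nat \<Rightarrow> 'a \<Rightarrow> nat \<Rightarrow> real)
    \<Rightarrow> (nat \<Rightarrow> nat \<Rightarrow> 'a \<Rightarrow> nat) \<Rightarrow> (nat \<Rightarrow> 'a \<Rightarrow> 'b::topological_space)
    \<Rightarrow> unit + nat + nat \<Rightarrow> 'a set set" where
  "model_blocks M C j j' omega R theta b =
     (case b of
        Inl _ \<Rightarrow> sigma_sets (space M)
                   ({C j -` A \<inter> space M | A. True} \<union> {C j' -` A \<inter> space M | A. True})
      | Inr (Inl k) \<Rightarrow> sigma_sets (space M)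
                   ({omega k -` A \<inter> space M | A. A \<in> sets omega_space}
                    \<union> {R i k -` A \<inter> space M | i A. True})
      | Inr (Inr l) \<Rightarrow> {theta l -` A \<inter> space M | A. A \<in> sets borel})"

end

(*
  Distinct atoms drawn from the diffuse law H differ almost surely, so theta(i,j) = theta(i',j')
  is almost surely the event that the row labels R(i, C j) and R(i', C j') agree.  Split according
  to whether the two columns share their cluster.  If C j = C j' = k, both row labels are drawn
  from the same weight vector omega k and agree with probability sum_l E[omega_l^2] (or 1 when
  i = i'); if C j <> C j', they come from independent weight vectors and agree with probability
  sum_l E[omega_l]^2.  Independence of the column labels from the cluster blocks turns this into
  P[C j = C j'] q + (1 - P[C j = C j']) p.  The moments are then computed from the Gamma
  representation of the Dirichlet law and from the product structure of stick-breaking weights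
  with Beta(1, nu) factors, whose moments form geometric series.
*)
theory Submission
  imports Defs
begin

lemma nn_integral_powr_exp_scaled:
  fixes s c :: real
  assumes s: "0 < s" and c: "0 < c"
  shows "(\<integral>\<^sup>+x. ennreal (indicator {0<..} x * x powr (s - 1) * exp (-(c * x))) \<partial>lborel)
         = ennreal (Gamma s / c powr s)"
proof -
  define f where "f t = ennreal (indicator {0..} t * t powr (s - 1) / exp t)" for t :: real
  define I where "I = (\<integral>\<^sup>+x. ennreal (indicator {0<..} x * x powr (s - 1) * exp (-(c * x))) \<partial>lborel)"
  have "f (c * x) = ennreal (c powr (s - 1)) * ennreal (indicator {0<..} x * x powr (s - 1) * exp (-(c * x)))"
    for x
    using c by (cases "0 < x")
      (auto simp: f_def indicator_def powr_mult exp_minus field_simps not_less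
        ennreal_mult[symmetric] zero_le_mult_iff)
  moreover have "f \<in> borel_measurable borel" unfolding f_def by measurable
  ultimately have "ennreal (Gamma s) = ennreal c * (ennreal (c powr (s - 1)) * I)"
    using nn_integral_real_affine[of f c 0] c
    by (simp add: Gamma_conv_nn_integral_real[OF s] f_def[symmetric] I_def nn_integral_cmult)
  also have "\<dots> = ennreal (c * c powr (s - 1)) * I"
    using c by (simp add: ennreal_mult mult.assoc)
  also have "c * c powr (s - 1) = c powr s"
    using c by (simp add: powr_diff)
  finally have I: "ennreal (Gamma s) = ennreal (c powr s) * I" .
  have "ennreal (Gamma s / c powr s) = ennreal (1 / c powr s) * ennreal (Gamma s)"
    using c Gamma_real_pos[OF s] by (simp add: ennreal_mult[symmetric])
  also have "\<dots> = (ennreal (1 / c powr s) * ennreal (c powr s)) * I"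
    unfolding I by (simp add: mult.assoc)
  also have "ennreal (1 / c powr s) * ennreal (c powr s) = 1"
    using c by (simp add: ennreal_mult[symmetric])
  finally show ?thesis by (simp add: I_def)
qed

lemma ennreal_power_divide_eq_nn_integral:
  fixes x S :: real and n :: nat
  assumes x: "0 \<le> x" and S: "0 < S" and n: "1 \<le> n"
  shows "ennreal ((x / S) ^ n) = ennreal (x ^ n / fact (n - 1)) *
           (\<integral>\<^sup>+t. ennreal (indicator {0<..} t * t ^ (n - 1) * exp (-(S * t))) \<partial>lborel)"
proof -
  have "(\<integral>\<^sup>+t. ennreal (indicator {0<..} t * t ^ (n - 1) * exp (-(S * t))) \<partial>lborel)
      = (\<integral>\<^sup>+t. ennreal (indicator {0<..} t * t powr (real n - 1) * exp (-(S * t))) \<partial>lborel)"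
    using n by (intro nn_integral_cong) (auto simp: indicator_def powr_realpow[symmetric] of_nat_diff)
  also have "\<dots> = ennreal (Gamma (real n) / S powr real n)"
    using n S by (intro nn_integral_powr_exp_scaled) auto
  also have "Gamma (real n) = fact (n - 1)"
    using Gamma_fact[of "n - 1"] n by (simp add: of_nat_diff)
  finally show ?thesis
    using x S by (simp add: ennreal_mult[symmetric] powr_realpow power_divide)
qed

lemma borel_measurable_gamma_density[measurable]: "gamma_density b \<in> borel_measurable borel"
  unfolding gamma_density_def by measurable

lemma nn_integral_gamma_density_power_exp:
  fixes b t :: real and k :: nat
  assumes b: "0 < b" and t: "-1 < t"
  shows "(\<integral>\<^sup>+x. ennreal (x ^ k * exp (-(t * x))) \<partial>density lborel (gamma_density b))
         = ennreal (pochhammer b k / (1 + t) powr (b + k))"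
proof -
  have "(\<integral>\<^sup>+x. ennreal (x ^ k * exp (-(t * x))) \<partial>density lborel (gamma_density b))
      = (\<integral>\<^sup>+x. ennreal (gamma_density b x) * ennreal (x ^ k * exp (-(t * x))) \<partial>lborel)"
    by (rule nn_integral_density; measurable)
  also have "\<dots> = (\<integral>\<^sup>+x. ennreal (1 / Gamma b) *
           ennreal (indicator {0<..} x * x powr (b + k - 1) * exp (-((1 + t) * x))) \<partial>lborel)"
  proof (rule nn_integral_cong)
    fix x :: real
    show "ennreal (gamma_density b x) * ennreal (x ^ k * exp (-(t * x)))
        = ennreal (1 / Gamma b) * ennreal (indicator {0<..} x * x powr (b + k - 1) * exp (-((1 + t) * x)))"
    proof (cases "0 < x")
      case True
      then have "x powr (b + k - 1) = x powr (b - 1) * x ^ k"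
        by (simp add: powr_add[symmetric] powr_realpow[symmetric] algebra_simps)
      moreover have "exp (-((1 + t) * x)) = exp (- x) * exp (-(t * x))"
        by (simp add: exp_add[symmetric] algebra_simps)
      ultimately show ?thesis
        using True Gamma_real_pos[OF b]
        by (simp add: gamma_density_def ennreal_mult[symmetric] mult_ac)
    qed (simp add: gamma_density_def)
  qed
  also have "\<dots> = ennreal (1 / Gamma b) * ennreal (Gamma (b + k) / (1 + t) powr (b + k))"
    using b t by (simp add: nn_integral_cmult nn_integral_powr_exp_scaled add_pos_nonneg)
  also have "\<dots> = ennreal (pochhammer b k / (1 + t) powr (b + k))"
    using b t Gamma_real_pos[of b] Gamma_real_pos[of "b + k"]
    by (simp add: ennreal_mult[symmetric] pochhammer_Gamma nonpos_Ints_def)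
  finally show ?thesis .
qed

lemma prob_space_gamma_density: "0 < b \<Longrightarrow> prob_space (density lborel (gamma_density b))"
  using nn_integral_gamma_density_power_exp[of b 0 0]
  by (intro prob_spaceI) simp

lemma AE_gamma_density_pos: "AE x in density lborel (gamma_density b). 0 < x"
  by (subst AE_density) (auto simp: gamma_density_def intro!: AE_I2 split: if_splits)

lemma nn_integral_one_plus_powr:
  fixes a :: real
  assumes a: "1 < a"
  shows "(\<integral>\<^sup>+t. ennreal (indicator {0<..} t * (1 + t) powr (- a)) \<partial>lborel) = ennreal (1 / (a - 1))"
proof -
  define f where "f x = ennreal (x powr (- a)) * indicator {1..} x" for x :: real
  have f_measurable: "f \<in> borel_measurable borel" unfolding f_def by measurable
  have "1 / (a - 1) = - (1 powr (- a + 1) / (- a + 1))"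
    using a by (simp add: field_simps)
  then have "((\<lambda>x. x powr (- a)) has_integral (1 / (a - 1))) {1..}"
    using has_integral_powr_to_inf[of "- a" 1] a by simp
  then have "ennreal (1 / (a - 1)) = integral\<^sup>N lborel f"
    unfolding f_def by (rule nn_integral_has_integral_lebesgue'[rotated, symmetric]) auto
  also have "\<dots> = (\<integral>\<^sup>+t. f (1 + t) \<partial>lborel)"
    using nn_integral_real_affine[OF f_measurable, of 1 1] by simp
  also have "\<dots> = (\<integral>\<^sup>+t. ennreal (indicator {0<..} t * (1 + t) powr (- a)) \<partial>lborel)"
  proof (rule nn_integral_cong_AE)
    show "AE t in lborel. f (1 + t) = ennreal (indicator {0<..} t * (1 + t) powr (- a))"
      using AE_lborel_singleton[of 0] by eventually_elim (auto simp: f_def indicator_def)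
  qed
  finally show ?thesis ..
qed

lemma nn_integral_mult_one_plus_powr:
  fixes c :: real
  assumes c: "0 < c"
  shows "(\<integral>\<^sup>+t. ennreal (indicator {0<..} t * t * (1 + t) powr (-(c + 2))) \<partial>lborel)
         = ennreal (1 / (c * (c + 1)))"
proof -
  define J where
    "J = (\<integral>\<^sup>+t. ennreal (indicator {0<..} t * t * (1 + t) powr (-(c + 2))) \<partial>lborel)"
  have split: "ennreal (indicator {0<..} t * (1 + t) powr (-(c + 1)))
      = ennreal (indicator {0<..} t * t * (1 + t) powr (-(c + 2)))
        + ennreal (indicator {0<..} t * (1 + t) powr (-(c + 2)))" for t :: real
  proof (cases "0 < t")
    case True
    have "-(c + 1) = 1 + -(c + 2)" by simp
    then have "(1 + t) powr (-(c + 1)) = (1 + t) * (1 + t) powr (-(c + 2))"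
      using True by (simp only: powr_mult_base)
    with True show ?thesis by (simp add: ennreal_plus[symmetric] distrib_right del: ennreal_plus)
  qed simp
  have "ennreal (1 / c) = (\<integral>\<^sup>+t. ennreal (indicator {0<..} t * (1 + t) powr (-(c + 1))) \<partial>lborel)"
    using nn_integral_one_plus_powr[of "c + 1"] c by simp
  also have "\<dots> = J + (\<integral>\<^sup>+t. ennreal (indicator {0<..} t * (1 + t) powr (-(c + 2))) \<partial>lborel)"
    unfolding split J_def by (rule nn_integral_add) auto
  also have "(\<integral>\<^sup>+t. ennreal (indicator {0<..} t * (1 + t) powr (-(c + 2))) \<partial>lborel) = ennreal (1 / (c + 1))"
    using nn_integral_one_plus_powr[of "c + 2"] c by simp
  finally have "J = ennreal (1 / c) - ennreal (1 / (c + 1))" by simp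
  moreover have "1 / c - 1 / (c + 1) = 1 / (c * (c + 1))"
    using c by (simp add: field_simps)
  ultimately show ?thesis using c by (simp add: J_def ennreal_minus)
qed

lemma nn_integral_PiM_gamma_power_exp:
  fixes L l n :: nat and b t :: real
  assumes b: "0 < b" and t: "-1 < t" and l: "l \<in> {1..L}"
  shows "(\<integral>\<^sup>+g. (\<Prod>m\<in>{1..L}. ennreal (g m ^ (if m = l then n else 0) * exp (-(t * g m))))
            \<partial>(\<Pi>\<^sub>M m\<in>{1..L}. density lborel (gamma_density b)))
         = ennreal (pochhammer b n / (1 + t) powr (L * b + n))"
proof -
  define k where "k m = (if m = l then n else 0)" for m
  interpret product_sigma_finite "\<lambda>_::nat. density lborel (gamma_density b)"
    using prob_space_gamma_density[OF b]
    by (simp add: product_sigma_finite_def prob_space_imp_sigma_finite)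
  have "(\<integral>\<^sup>+g. (\<Prod>m\<in>{1..L}. ennreal (g m ^ k m * exp (-(t * g m))))
            \<partial>(\<Pi>\<^sub>M m\<in>{1..L}. density lborel (gamma_density b)))
      = (\<Prod>m\<in>{1..L}. \<integral>\<^sup>+x. ennreal (x ^ k m * exp (-(t * x))) \<partial>density lborel (gamma_density b))"
    by (rule product_nn_integral_prod) auto
  also have "\<dots> = (\<Prod>m\<in>{1..L}. ennreal (pochhammer b (k m) / (1 + t) powr (b + k m)))"
    using b t by (simp add: nn_integral_gamma_density_power_exp)
  also have "\<dots> = ennreal ((\<Prod>m\<in>{1..L}. pochhammer b (k m)) / (\<Prod>m\<in>{1..L}. (1 + t) powr (b + k m)))"
    using b by (subst prod_ennreal) (auto simp: pochhammer_pos less_imp_le prod_dividef)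
  also have "(\<Prod>m\<in>{1..L}. pochhammer b (k m)) = pochhammer b n"
    using l by (simp add: k_def if_distrib pochhammer_0 prod.delta cong: if_cong)
  also have "(\<Prod>m\<in>{1..L}. (1 + t) powr (b + k m)) = (1 + t) powr (\<Sum>m\<in>{1..L}. b + k m)"
    using t by (simp add: powr_sum)
  also have "(\<Sum>m\<in>{1..L}. b + real (k m)) = L * b + n"
    using l by (simp add: k_def sum.distrib if_distrib[of real] sum.delta cong: if_cong)
  finally show ?thesis by (simp add: k_def)
qed

text \<open>The Dirichlet moments are computed from the Gamma representation by writing
  \<open>(x / S)^n = x^n / (n-1)! * \<integral>\<^sub>0\<^sup>\<infinity> t^(n-1) e^(-S t) dt\<close> with \<open>S\<close> the sum of the Gamma variables:
  after Fubini, the integrand factorises over the independent coordinates.\<close>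

lemma ennreal_normalised_power_eq_nn_integral:
  fixes g :: "nat \<Rightarrow> real" and L l n :: nat
  assumes pos: "\<forall>m\<in>{1..L}. 0 < g m" and l: "l \<in> {1..L}" and n: "1 \<le> n"
  shows "ennreal ((g l / (\<Sum>m\<in>{1..L}. g m)) ^ n)
         = (\<integral>\<^sup>+t. ennreal (indicator {0<..} t * t ^ (n - 1) / fact (n - 1)) *
              (\<Prod>m\<in>{1..L}. ennreal (g m ^ (if m = l then n else 0) * exp (-(t * g m)))) \<partial>lborel)"
proof -
  define S where "S = (\<Sum>m\<in>{1..L}. g m)"
  have S: "0 < S" unfolding S_def using pos l by (intro sum_pos) auto
  have gl: "0 < g l" using pos l by auto
  have "(\<Prod>m\<in>{1..L}. ennreal (g m ^ (if m = l then n else 0) * exp (-(t * g m))))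
      = ennreal (g l ^ n * exp (-(S * t)))" for t
  proof -
    have "(\<Prod>m\<in>{1..L}. g m ^ (if m = l then n else 0) * exp (-(t * g m)))
        = (\<Prod>m\<in>{1..L}. g m ^ (if m = l then n else 0)) * exp (\<Sum>m\<in>{1..L}. -(t * g m))"
      by (simp add: prod.distrib exp_sum)
    also have "\<dots> = g l ^ n * exp (-(S * t))"
      using l by (simp add: S_def if_distrib prod.delta sum_negf sum_distrib_left mult.commute cong: if_cong)
    finally show ?thesis using pos by (subst prod_ennreal) (auto simp: less_imp_le)
  qed
  then have "(\<integral>\<^sup>+t. ennreal (indicator {0<..} t * t ^ (n - 1) / fact (n - 1)) *
        (\<Prod>m\<in>{1..L}. ennreal (g m ^ (if m = l then n else 0) * exp (-(t * g m)))) \<partial>lborel)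
      = (\<integral>\<^sup>+t. ennreal (g l ^ n / fact (n - 1)) *
        ennreal (indicator {0<..} t * t ^ (n - 1) * exp (-(S * t))) \<partial>lborel)"
    using gl by (intro nn_integral_cong) (simp add: indicator_def ennreal_mult[symmetric] mult_ac)
  also have "\<dots> = ennreal (g l ^ n / fact (n - 1)) *
      (\<integral>\<^sup>+t. ennreal (indicator {0<..} t * t ^ (n - 1) * exp (-(S * t))) \<partial>lborel)"
    by (rule nn_integral_cmult) measurable
  also have "\<dots> = ennreal ((g l / S) ^ n)"
    using gl S n by (intro ennreal_power_divide_eq_nn_integral[symmetric]) auto
  finally show ?thesis by (simp add: S_def)
qed

lemma nn_integral_gamma_normalised_power:
  fixes L l n :: nat and b :: real
  assumes b: "0 < b" and l: "l \<in> {1..L}" and n: "1 \<le> n"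
  shows "(\<integral>\<^sup>+g. ennreal ((g l / (\<Sum>m\<in>{1..L}. g m)) ^ n)
            \<partial>(\<Pi>\<^sub>M m\<in>{1..L}. density lborel (gamma_density b)))
         = ennreal (pochhammer b n / fact (n - 1)) *
           (\<integral>\<^sup>+t. ennreal (indicator {0<..} t * t ^ (n - 1) * (1 + t) powr (-(L * b + n))) \<partial>lborel)"
proof -
  define G where "G = density lborel (gamma_density b)"
  define PG where "PG = (\<Pi>\<^sub>M m\<in>{1..L}. G)"
  define K where "K g t = ennreal (indicator {0<..} t * t ^ (n - 1) / fact (n - 1)) *
      (\<Prod>m\<in>{1..L}. ennreal (g m ^ (if m = l then n else 0) * exp (-(t * g m))))"
    for g :: "nat \<Rightarrow> real" and t :: real
  interpret G: prob_space G unfolding G_def by (rule prob_space_gamma_density[OF b])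
  interpret PG: prob_space PG unfolding PG_def by (intro prob_space_PiM G.prob_space_axioms)
  interpret pair_sigma_finite PG lborel
    by (simp add: pair_sigma_finite_def PG.sigma_finite_measure_axioms sigma_finite_lborel)
  have [measurable_cong]: "sets G = sets borel" by (simp add: G_def)
  have "AE g in PG. \<forall>m\<in>{1..L}. 0 < g m"
    unfolding PG_def G_def
    by (intro eventually_ball_finite ballI AE_PiM_component prob_space_gamma_density b AE_gamma_density_pos) auto
  then have "AE g in PG. ennreal ((g l / (\<Sum>m\<in>{1..L}. g m)) ^ n) = (\<integral>\<^sup>+t. K g t \<partial>lborel)"
    by eventually_elim (unfold K_def, erule ennreal_normalised_power_eq_nn_integral[OF _ l n])
  then have "(\<integral>\<^sup>+g. ennreal ((g l / (\<Sum>m\<in>{1..L}. g m)) ^ n) \<partial>PG) = (\<integral>\<^sup>+g. \<integral>\<^sup>+t. K g t \<partial>lborel \<partial>PG)"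
    by (rule nn_integral_cong_AE)
  also have "\<dots> = (\<integral>\<^sup>+t. \<integral>\<^sup>+g. K g t \<partial>PG \<partial>lborel)"
    by (rule Fubini'[symmetric]) (simp add: K_def PG_def)
  also have "\<dots> = (\<integral>\<^sup>+t. ennreal (pochhammer b n / fact (n - 1)) *
      ennreal (indicator {0<..} t * t ^ (n - 1) * (1 + t) powr (-(L * b + n))) \<partial>lborel)"
  proof (rule nn_integral_cong)
    fix t :: real
    have "(\<integral>\<^sup>+g. K g t \<partial>PG) = ennreal (indicator {0<..} t * t ^ (n - 1) / fact (n - 1)) *
        (\<integral>\<^sup>+g. (\<Prod>m\<in>{1..L}. ennreal (g m ^ (if m = l then n else 0) * exp (-(t * g m)))) \<partial>PG)"
      unfolding K_def PG_def by (rule nn_integral_cmult) measurable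
    also have "\<dots> = ennreal (pochhammer b n / fact (n - 1)) *
        ennreal (indicator {0<..} t * t ^ (n - 1) * (1 + t) powr (-(L * b + n)))"
    proof (cases "0 < t")
      case True
      have "(1 + t) powr (-(L * b + n)) = 1 / (1 + t) powr (L * b + n)"
        by (rule powr_minus_divide)
      then show ?thesis
        using nn_integral_PiM_gamma_power_exp[OF b _ l, of t n] b True
        by (simp add: PG_def G_def ennreal_mult[symmetric] pochhammer_pos less_imp_le mult_ac)
    qed simp
    finally show "(\<integral>\<^sup>+g. K g t \<partial>PG) = \<dots>" .
  qed
  also have "\<dots> = ennreal (pochhammer b n / fact (n - 1)) *
      (\<integral>\<^sup>+t. ennreal (indicator {0<..} t * t ^ (n - 1) * (1 + t) powr (-(L * b + n))) \<partial>lborel)"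
    by (rule nn_integral_cmult) measurable
  finally show ?thesis by (simp add: PG_def G_def)
qed

lemma dirichlet_moment:
  fixes L l n :: nat and b :: real
  assumes b: "0 < b" and n: "1 \<le> n"
  shows "(\<integral>y. y l ^ n \<partial>dirichlet_measure L b) =
    (if l \<in> {1..L} then pochhammer b n / fact (n - 1) *
       enn2real (\<integral>\<^sup>+t. ennreal (indicator {0<..} t * t ^ (n - 1) * (1 + t) powr (-(L * b + n))) \<partial>lborel)
     else 0)"
proof -
  define PG where "PG = (\<Pi>\<^sub>M m\<in>{1..L}. density lborel (gamma_density b))"
  define normalise where
    "normalise g l = (if l \<in> {1..L} then g l / (\<Sum>m\<in>{1..L}. g m) else 0)" for g :: "nat \<Rightarrow> real" and l
  have normalise_measurable: "normalise \<in> measurable PG omega_space"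
    unfolding omega_space_def normalise_def[abs_def] PG_def
  proof (rule measurable_PiM_single')
    show "(\<lambda>g. if l \<in> {1..L} then g l / (\<Sum>m\<in>{1..L}. g m) else 0)
        \<in> borel_measurable (\<Pi>\<^sub>M m\<in>{1..L}. density lborel (gamma_density b))" for l
      by (cases "l \<in> {1..L}") auto
  qed (auto simp: space_PiM)
  have "(\<integral>y. y l ^ n \<partial>dirichlet_measure L b) = (\<integral>g. normalise g l ^ n \<partial>PG)"
    unfolding dirichlet_measure_def normalise_def[symmetric] PG_def[symmetric]
    by (rule integral_distr[OF normalise_measurable]) (simp add: omega_space_def)
  also have "\<dots> = (if l \<in> {1..L} then enn2real (\<integral>\<^sup>+g. ennreal ((g l / (\<Sum>m\<in>{1..L}. g m)) ^ n) \<partial>PG) else 0)"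
  proof (cases "l \<in> {1..L}")
    case True
    have "AE g in PG. \<forall>m\<in>{1..L}. 0 < g m"
      unfolding PG_def
      by (intro eventually_ball_finite ballI AE_PiM_component prob_space_gamma_density b AE_gamma_density_pos) auto
    then have "AE g in PG. 0 \<le> normalise g l ^ n"
      by eventually_elim
        (use True in \<open>auto intro!: zero_le_power divide_nonneg_nonneg sum_nonneg simp: normalise_def less_imp_le\<close>)
    moreover have "(\<lambda>g. normalise g l ^ n) \<in> borel_measurable PG"
      using normalise_measurable by (rule measurable_compose) (simp add: omega_space_def)
    ultimately show ?thesis
      using True by (simp add: integral_eq_nn_integral normalise_def)
  next
    case False
    then have "normalise g l = 0" for g by (simp add: normalise_def del: atLeastAtMost_iff)
    then show ?thesis using False n by (simp del: atLeastAtMost_iff)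
  qed
  finally show ?thesis
    using nn_integral_gamma_normalised_power[OF b _ n] b
    by (simp add: PG_def enn2real_mult pochhammer_pos less_imp_le)
qed

lemma dirichlet_mean:
  assumes "0 < b"
  shows "(\<integral>y. y l \<partial>dirichlet_measure L b) = (if l \<in> {1..L} then 1 / L else 0)"
proof -
  have "l \<in> {1..L} \<Longrightarrow> 0 < real L * b" using assms by simp
  then show ?thesis
    using dirichlet_moment[OF assms, where n = 1] nn_integral_one_plus_powr[of "L * b + 1"] assms
    by (auto simp: pochhammer_1)
qed

lemma dirichlet_second_moment:
  assumes b: "0 < b"
  shows "(\<integral>y. y l ^ 2 \<partial>dirichlet_measure L b)
         = (if l \<in> {1..L} then (1 + b) / (L * (1 + L * b)) else 0)"
proof (cases "l \<in> {1..L}")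
  case True
  then have L: "0 < real L" by simp
  have "pochhammer b 2 = b * (b + 1)" by (simp add: pochhammer_Suc numeral_2_eq_2)
  moreover have "b * (b + 1) * (1 / (x * b * (x * b + 1))) = (1 + b) / (x * (1 + x * b))" for x
  proof -
    have "b * (b + 1) * (1 / (x * b * (x * b + 1))) = (b * (1 + b)) / (b * (x * (1 + x * b)))"
      by (simp add: algebra_simps)
    then show ?thesis using b by simp
  qed
  ultimately show ?thesis
    using True dirichlet_moment[OF b, where n = 2] nn_integral_mult_one_plus_powr[of "L * b"] L b
    by simp
qed (use b in \<open>auto simp: dirichlet_moment\<close>)

lemma dirichlet_sums_squared_means:
  assumes "0 < b" and "1 \<le> L"
  shows "(\<lambda>l. (\<integral>y. y l \<partial>dirichlet_measure L b)\<^sup>2) sums (1 / L)"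
proof -
  have "(\<lambda>l. (\<integral>y. y l \<partial>dirichlet_measure L b)\<^sup>2) sums (\<Sum>l\<in>{1..L}. (\<integral>y. y l \<partial>dirichlet_measure L b)\<^sup>2)"
    using assms by (intro sums_finite) (auto simp: dirichlet_mean)
  then show ?thesis using assms by (simp add: dirichlet_mean power2_eq_square)
qed

lemma dirichlet_sums_second_moments:
  assumes "0 < b" and "1 \<le> L"
  shows "(\<lambda>l. \<integral>y. y l ^ 2 \<partial>dirichlet_measure L b) sums ((1 + b) / (1 + L * b))"
proof -
  have "(\<lambda>l. \<integral>y. y l ^ 2 \<partial>dirichlet_measure L b) sums (\<Sum>l\<in>{1..L}. \<integral>y. y l ^ 2 \<partial>dirichlet_measure L b)"
    using assms by (intro sums_finite) (auto simp: dirichlet_second_moment)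
  then show ?thesis using assms by (simp add: dirichlet_second_moment)
qed

lemma borel_measurable_beta_density[measurable]: "beta_density a b \<in> borel_measurable borel"
  unfolding beta_density_def by measurable

lemma Beta_pos: "0 < a \<Longrightarrow> 0 < b \<Longrightarrow> 0 < Beta a (b :: real)"
  by (auto simp: Beta_def intro!: divide_pos_pos mult_pos_pos Gamma_real_pos)

lemma Beta_one_left:
  assumes "0 < y" shows "Beta 1 y = 1 / (y :: real)"
  using Gamma_plus1[of y] Gamma_real_pos[OF assms] assms
  by (simp add: Beta_def add.commute nonpos_Ints_def Gamma_eq_zero_iff)

lemma Beta_ratio_one_left:
  fixes y :: real and n :: nat
  assumes y: "0 < y"
  shows "Beta (1 + real n) y / Beta 1 y = fact n / pochhammer (y + 1) n"
proof -
  have "pochhammer (y + 1) n = Gamma (y + 1 + n) / Gamma (y + 1)"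
    using y by (intro pochhammer_Gamma) (auto simp: nonpos_Ints_def)
  moreover have "Gamma (y + 1) = y * Gamma y"
    using y by (intro Gamma_plus1) (auto simp: nonpos_Ints_def)
  moreover have "0 < Gamma y" "0 < Gamma (y + 1 + n)"
    using y by (auto intro!: Gamma_real_pos)
  ultimately show ?thesis
    using y by (simp add: Beta_def Beta_one_left Gamma_fact add_ac field_simps)
qed

lemma nn_integral_beta_density_power:
  fixes a b :: real and k m :: nat
  assumes a: "0 < a" and b: "0 < b"
  shows "(\<integral>\<^sup>+x. ennreal (x ^ k * (1 - x) ^ m) \<partial>density lborel (beta_density a b))
         = ennreal (Beta (a + k) (b + m) / Beta a b)"
proof -
  have "(\<integral>\<^sup>+x. ennreal (x ^ k * (1 - x) ^ m) \<partial>density lborel (beta_density a b))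
      = (\<integral>\<^sup>+x. ennreal (beta_density a b x) * ennreal (x ^ k * (1 - x) ^ m) \<partial>lborel)"
    by (rule nn_integral_density; measurable)
  also have "\<dots> = (\<integral>\<^sup>+x. ennreal (1 / Beta a b) *
      (ennreal (x powr (a + k - 1) * (1 - x) powr (b + m - 1)) * indicator {0..1} x) \<partial>lborel)"
  proof (rule nn_integral_cong_AE)
    have "AE x in lborel. x \<noteq> 0 \<and> x \<noteq> 1"
      using AE_lborel_singleton[of 0] AE_lborel_singleton[of 1] by eventually_elim auto
    then show "AE x in lborel. ennreal (beta_density a b x) * ennreal (x ^ k * (1 - x) ^ m)
        = ennreal (1 / Beta a b) * (ennreal (x powr (a + k - 1) * (1 - x) powr (b + m - 1)) * indicator {0..1} x)"
    proof eventually_elim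
      case (elim x)
      show ?case
      proof (cases "0 < x \<and> x < 1")
        case True
        then have "x powr (a + k - 1) = x powr (a - 1) * x ^ k"
          and "(1 - x) powr (b + m - 1) = (1 - x) powr (b - 1) * (1 - x) ^ m"
          by (simp_all add: powr_add[symmetric] powr_realpow[symmetric] algebra_simps)
        with True show ?thesis
          using Beta_pos[OF a b] by (simp add: beta_density_def ennreal_mult[symmetric] mult_ac)
      next
        case False
        with elim show ?thesis by (auto simp: beta_density_def indicator_def)
      qed
    qed
  qed
  also have "\<dots> = ennreal (1 / Beta a b) * ennreal (Beta (a + k) (b + m))"
    using a b
    by (subst nn_integral_cmult, measurable)
      (simp add: nn_integral_has_integral_lebesgue'[OF _ has_integral_Beta_real])
  finally show ?thesis
    using Beta_pos[OF a b] Beta_pos[of "a + k" "b + m"] a b by (simp add: ennreal_mult[symmetric])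
qed

lemma prob_space_beta_density:
  assumes "0 < a" "0 < b" shows "prob_space (density lborel (beta_density a b))"
  using nn_integral_beta_density_power[OF assms, of 0 0] Beta_pos[OF assms]
  by (intro prob_spaceI) auto

lemma AE_beta_density_01: "AE x in density lborel (beta_density a b). 0 < x \<and> x < 1"
  by (subst AE_density) (auto simp: beta_density_def intro!: AE_I2 split: if_splits)

lemma nn_integral_stick_break_power:
  fixes B :: "real measure" and l n :: nat
  assumes B: "prob_space B" and sets_B: "sets B = sets borel"
    and B_01: "AE x in B. 0 \<le> x \<and> x \<le> 1" and l: "1 \<le> l"
  shows "(\<integral>\<^sup>+w. ennreal (stick_break w l ^ n) \<partial>(\<Pi>\<^sub>M g\<in>(UNIV :: nat set). B))
         = (\<integral>\<^sup>+x. ennreal (x ^ n) \<partial>B) * (\<integral>\<^sup>+x. ennreal ((1 - x) ^ n) \<partial>B) ^ (l - 1)"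
proof -
  interpret product_prob_space "\<lambda>_ :: nat. B" UNIV
    using B by (simp add: product_prob_space_def product_prob_space_axioms_def product_sigma_finite_def
      prob_space_imp_sigma_finite)
  define P where "P = (\<Pi>\<^sub>M g\<in>(UNIV :: nat set). B)"
  define F where "F g x = (if g = l then x ^ n else (1 - x) ^ n)" for g :: nat and x :: real
  have [measurable_cong]: "sets B = sets borel" by (rule sets_B)
  have stick_power: "stick_break w l ^ n = (\<Prod>g\<in>{1..l}. F g (w g))" for w
  proof -
    have "{1..l} = insert l {1..<l}" using l by auto
    then have "(\<Prod>g\<in>{1..l}. F g (w g)) = w l ^ n * (\<Prod>g\<in>{1..<l}. (1 - w g) ^ n)"
      by (simp add: F_def)
    then show ?thesis using l by (simp add: stick_break_def power_mult_distrib prod_power_distrib)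
  qed
  have "AE w in P. \<forall>g. 0 \<le> w g \<and> w g \<le> 1"
    unfolding AE_all_countable P_def using AE_component B_01 by blast
  then have "AE w in P. ennreal (stick_break w l ^ n) = (\<Prod>g\<in>{1..l}. ennreal (F g (w g)))"
    by eventually_elim (simp add: stick_power prod_ennreal F_def)
  then have "(\<integral>\<^sup>+w. ennreal (stick_break w l ^ n) \<partial>P) = (\<integral>\<^sup>+w. (\<Prod>g\<in>{1..l}. ennreal (F g (w g))) \<partial>P)"
    by (rule nn_integral_cong_AE)
  also have "\<dots> = (\<integral>\<^sup>+w. (\<Prod>g\<in>{1..l}. ennreal (F g (w g))) \<partial>distr P (\<Pi>\<^sub>M g\<in>{1..l}. B) (\<lambda>w. restrict w {1..l}))"
    by (subst nn_integral_distr) (auto simp: P_def F_def intro!: nn_integral_cong prod.cong)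
  also have "distr P (\<Pi>\<^sub>M g\<in>{1..l}. B) (\<lambda>w. restrict w {1..l}) = (\<Pi>\<^sub>M g\<in>{1..l}. B)"
    unfolding P_def by (rule distr_PiM_restrict_finite) auto
  also have "(\<integral>\<^sup>+w. (\<Prod>g\<in>{1..l}. ennreal (F g (w g))) \<partial>(\<Pi>\<^sub>M g\<in>{1..l}. B))
      = (\<Prod>g\<in>{1..l}. \<integral>\<^sup>+x. ennreal (F g x) \<partial>B)"
    by (rule product_nn_integral_prod) (auto simp: F_def)
  also have "\<dots> = (\<integral>\<^sup>+x. ennreal (x ^ n) \<partial>B) * (\<integral>\<^sup>+x. ennreal ((1 - x) ^ n) \<partial>B) ^ (l - 1)"
  proof -
    have "{1..l} = insert l {1..<l}" using l by auto
    then show ?thesis by (simp add: F_def)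
  qed
  finally show ?thesis by (simp add: P_def)
qed

lemma integral_stick_break_power:
  fixes B :: "real measure" and l n :: nat
  assumes B: "prob_space B" and sets_B: "sets B = sets borel"
    and B_01: "AE x in B. 0 \<le> x \<and> x \<le> 1" and l: "1 \<le> l"
  shows "(\<integral>w. stick_break w l ^ n \<partial>(\<Pi>\<^sub>M g\<in>(UNIV :: nat set). B))
         = enn2real ((\<integral>\<^sup>+x. ennreal (x ^ n) \<partial>B) * (\<integral>\<^sup>+x. ennreal ((1 - x) ^ n) \<partial>B) ^ (l - 1))"
proof -
  interpret product_prob_space "\<lambda>_ :: nat. B" UNIV
    using B by (simp add: product_prob_space_def product_prob_space_axioms_def product_sigma_finite_def
      prob_space_imp_sigma_finite)
  have [measurable_cong]: "sets B = sets borel" by (rule sets_B)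
  have "AE w in (\<Pi>\<^sub>M g\<in>(UNIV :: nat set). B). \<forall>g. 0 \<le> w g \<and> w g \<le> 1"
    unfolding AE_all_countable using AE_component B_01 by blast
  then have "AE w in (\<Pi>\<^sub>M g\<in>(UNIV :: nat set). B). 0 \<le> stick_break w l ^ n"
    by eventually_elim (auto simp: stick_break_def intro!: zero_le_power mult_nonneg_nonneg prod_nonneg)
  moreover have "(\<lambda>w. stick_break w l ^ n) \<in> borel_measurable (\<Pi>\<^sub>M g\<in>(UNIV :: nat set). B)"
    unfolding stick_break_def by measurable
  ultimately show ?thesis
    using nn_integral_stick_break_power[OF assms] by (simp add: integral_eq_nn_integral)
qed

lemma gem_moment:
  fixes \<nu> :: real and l n :: nat
  assumes \<nu>: "0 < \<nu>" and n: "1 \<le> n"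
  shows "(\<integral>y. y l ^ n \<partial>gem_measure \<nu>)
         = (if 1 \<le> l then fact n / pochhammer (\<nu> + 1) n * (\<nu> / (\<nu> + n)) ^ (l - 1) else 0)"
proof -
  define B where "B = density lborel (beta_density 1 \<nu>)"
  define P where "P = (\<Pi>\<^sub>M g\<in>(UNIV :: nat set). B)"
  have [measurable_cong]: "sets B = sets borel" by (simp add: B_def)
  interpret B: prob_space B unfolding B_def by (rule prob_space_beta_density) (use \<nu> in auto)
  have B_01: "AE x in B. 0 \<le> x \<and> x \<le> 1"
    using AE_beta_density_01[of 1 \<nu>] unfolding B_def by eventually_elim auto
  have stick_break_measurable: "stick_break \<in> measurable P omega_space"
    unfolding omega_space_def P_def stick_break_def
    by (rule measurable_PiM_single') (measurable, auto simp: space_PiM)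
  have "(\<integral>y. y l ^ n \<partial>gem_measure \<nu>) = (\<integral>w. stick_break w l ^ n \<partial>P)"
    unfolding gem_measure_def B_def[symmetric] P_def[symmetric]
    by (rule integral_distr[OF stick_break_measurable]) (simp add: omega_space_def)
  also have "\<dots> = (if 1 \<le> l then Beta (1 + real n) \<nu> / Beta 1 \<nu> * (Beta 1 (\<nu> + n) / Beta 1 \<nu>) ^ (l - 1) else 0)"
  proof (cases "1 \<le> l")
    case True
    then show ?thesis
      using integral_stick_break_power[OF B.prob_space_axioms _ B_01 True, of n]
        nn_integral_beta_density_power[of 1 \<nu> n 0] nn_integral_beta_density_power[of 1 \<nu> 0 n] \<nu>
      by (simp add: P_def B_def enn2real_mult ennreal_power[symmetric] Beta_pos less_imp_le)
  qed (use n in \<open>simp add: stick_break_def\<close>)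
  finally show ?thesis
    using \<nu> by (simp only: Beta_ratio_one_left) (simp add: Beta_one_left add_pos_nonneg)
qed

lemma gem_mean:
  "0 < \<nu> \<Longrightarrow> (\<integral>y. y l \<partial>gem_measure \<nu>)
     = (if 1 \<le> l then 1 / (\<nu> + 1) * (\<nu> / (\<nu> + 1)) ^ (l - 1) else 0)"
  using gem_moment[of \<nu> 1 l] by simp

lemma gem_second_moment:
  "0 < \<nu> \<Longrightarrow> (\<integral>y. y l ^ 2 \<partial>gem_measure \<nu>)
     = (if 1 \<le> l then 2 / ((\<nu> + 1) * (\<nu> + 2)) * (\<nu> / (\<nu> + 2)) ^ (l - 1) else 0)"
  using gem_moment[of \<nu> 2 l] by (simp add: pochhammer_Suc numeral_2_eq_2 add.assoc)

lemma sums_shifted_geometric: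
  fixes a r :: real
  assumes "\<bar>r\<bar> < 1"
  shows "(\<lambda>l. if 1 \<le> l then a * r ^ (l - 1) else 0) sums (a / (1 - r))"
proof -
  have "(\<lambda>m. a * r ^ m) sums (a * (1 / (1 - r)))"
    using assms by (intro sums_mult geometric_sums) simp
  then have "(\<lambda>m. (\<lambda>l. if 1 \<le> l then a * r ^ (l - 1) else 0) (Suc m)) sums (a / (1 - r))"
    by simp
  then show ?thesis by (subst (asm) sums_Suc_iff) simp
qed

lemma gem_sums_squared_means:
  assumes \<nu>: "0 < \<nu>"
  shows "(\<lambda>l. (\<integral>y. y l \<partial>gem_measure \<nu>)\<^sup>2) sums (1 / (2 * \<nu> + 1))"
proof -
  have "\<bar>(\<nu> / (\<nu> + 1))\<^sup>2\<bar> < 1"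
    using \<nu> by (simp add: power_divide power_strict_mono)
  then have "(\<lambda>l. if 1 \<le> l then (1 / (\<nu> + 1))\<^sup>2 * ((\<nu> / (\<nu> + 1))\<^sup>2) ^ (l - 1) else 0)
      sums ((1 / (\<nu> + 1))\<^sup>2 / (1 - (\<nu> / (\<nu> + 1))\<^sup>2))"
    by (rule sums_shifted_geometric)
  moreover have "(1 / (\<nu> + 1))\<^sup>2 / (1 - (\<nu> / (\<nu> + 1))\<^sup>2) = 1 / (2 * \<nu> + 1)"
  proof -
    have "\<nu> + 1 \<noteq> 0" using \<nu> by simp
    then have "1 - (\<nu> / (\<nu> + 1))\<^sup>2 = ((\<nu> + 1)\<^sup>2 - \<nu>\<^sup>2) / (\<nu> + 1)\<^sup>2"
      by (simp add: power_divide diff_divide_distrib)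
    also have "(\<nu> + 1)\<^sup>2 - \<nu>\<^sup>2 = 2 * \<nu> + 1"
      by (simp add: power2_eq_square algebra_simps)
    finally show ?thesis using \<open>\<nu> + 1 \<noteq> 0\<close> \<nu> by (simp add: power_divide)
  qed
  moreover have "(\<integral>y. y l \<partial>gem_measure \<nu>)\<^sup>2
      = (if 1 \<le> l then (1 / (\<nu> + 1))\<^sup>2 * ((\<nu> / (\<nu> + 1))\<^sup>2) ^ (l - 1) else 0)" for l
  proof -
    have "(x ^ k)\<^sup>2 = (x\<^sup>2) ^ k" for x :: real and k
      by (simp add: power_mult[symmetric] mult.commute)
    then show ?thesis using \<nu> by (simp add: gem_mean power_mult_distrib power_divide)
  qed
  ultimately show ?thesis by simp
qed

lemma gem_sums_second_moments:
  assumes \<nu>: "0 < \<nu>"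
  shows "(\<lambda>l. \<integral>y. y l ^ 2 \<partial>gem_measure \<nu>) sums (1 / (1 + \<nu>))"
proof -
  have "(\<lambda>l. if 1 \<le> l then 2 / ((\<nu> + 1) * (\<nu> + 2)) * (\<nu> / (\<nu> + 2)) ^ (l - 1) else 0)
      sums (2 / ((\<nu> + 1) * (\<nu> + 2)) / (1 - \<nu> / (\<nu> + 2)))"
    using \<nu> by (intro sums_shifted_geometric) simp
  moreover have "1 - \<nu> / (\<nu> + 2) = 2 / (\<nu> + 2)"
    using \<nu> by (simp add: field_simps)
  moreover have "2 / ((\<nu> + 1) * (\<nu> + 2)) / (2 / (\<nu> + 2)) = 1 / (1 + \<nu>)"
  proof -
    have nonzero: "(\<nu> + 1) * (\<nu> + 2) * 2 \<noteq> 0" "1 + \<nu> \<noteq> 0" using \<nu> by auto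
    have "2 / ((\<nu> + 1) * (\<nu> + 2)) / (2 / (\<nu> + 2)) = (2 * (\<nu> + 2)) / ((\<nu> + 1) * (\<nu> + 2) * 2)"
      by (rule divide_divide_times_eq)
    also have "\<dots> = 1 / (1 + \<nu>)"
      by (simp only: frac_eq_eq[OF nonzero]) (simp add: algebra_simps)
    finally show ?thesis .
  qed
  ultimately show ?thesis using \<nu> by (simp add: gem_second_moment)
qed

lemma (in prob_space) prob_UN_Int_const_fraction:
  fixes A B :: "'i \<Rightarrow> 'a set"
  assumes I: "countable I" and A: "\<And>i. i \<in> I \<Longrightarrow> A i \<in> events" and B: "\<And>i. i \<in> I \<Longrightarrow> B i \<in> events"
    and disj: "disjoint_family_on A I" and c: "0 \<le> c"
    and frac: "\<And>i. i \<in> I \<Longrightarrow> prob (A i \<inter> B i) = c * prob (A i)"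
  shows "prob (\<Union>i\<in>I. A i \<inter> B i) = c * prob (\<Union>i\<in>I. A i)"
proof -
  have "disjoint_family_on (\<lambda>i. A i \<inter> B i) I"
    using disj by (auto simp: disjoint_family_on_def)
  then have "emeasure M (\<Union>i\<in>I. A i \<inter> B i) = (\<integral>\<^sup>+i. emeasure M (A i \<inter> B i) \<partial>count_space I)"
    using A B I by (intro emeasure_UN_countable) auto
  also have "\<dots> = (\<integral>\<^sup>+i. ennreal c * emeasure M (A i) \<partial>count_space I)"
    using A B frac c by (intro nn_integral_cong) (auto simp: emeasure_eq_measure ennreal_mult[symmetric])
  also have "\<dots> = ennreal c * emeasure M (\<Union>i\<in>I. A i)"
    using A I disj by (simp add: nn_integral_cmult emeasure_UN_countable)
  finally show ?thesis
    using c by (simp add: emeasure_eq_measure ennreal_mult[symmetric])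
qed

lemma (in prob_space) prob_eq_zero_if_indep_diffuse:
  fixes X Y :: "'a \<Rightarrow> 'b::polish_space"
  assumes indep: "indep_var borel X borel Y"
    and diffuse: "\<And>y. emeasure (distr M borel Y) {y} = 0"
  shows "prob {x \<in> space M. X x = Y x} = 0"
proof -
  have X: "random_variable borel X" and Y: "random_variable borel Y"
    using indep by (auto simp: indep_var_distribution_eq)
  interpret PY: prob_space "distr M borel Y" using Y by (rule prob_space_distr)
  define D where "D = {p :: 'b \<times> 'b. fst p = snd p}"
  have "closed D" unfolding D_def by (intro closed_Collect_eq continuous_intros)
  then have D: "D \<in> sets (borel \<Otimes>\<^sub>M borel)" by (subst borel_prod) simp
  have "emeasure M {x \<in> space M. X x = Y x} = emeasure (distr M (borel \<Otimes>\<^sub>M borel) (\<lambda>x. (X x, Y x))) D"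
    using X Y D by (subst emeasure_distr) (auto simp: D_def intro!: arg_cong[where f = "emeasure M"])
  also have "\<dots> = emeasure (distr M borel X \<Otimes>\<^sub>M distr M borel Y) D"
    using indep by (simp add: indep_var_distribution_eq)
  also have "\<dots> = (\<integral>\<^sup>+x. emeasure (distr M borel Y) (Pair x -` D) \<partial>distr M borel X)"
    using D by (intro PY.emeasure_pair_measure_alt) simp
  also have "\<dots> = 0"
    using diffuse by (simp add: D_def vimage_def)
  finally show ?thesis by (simp add: measure_def)
qed

lemma sets_Collect_eq_count_space:
  fixes f g :: "'a \<Rightarrow> 'c::countable"
  assumes f: "f \<in> measurable M (count_space UNIV)" and g: "g \<in> measurable M (count_space UNIV)"
  shows "{x \<in> space M. f x = g x} \<in> sets M"
proof -
  have "{x \<in> space M. f x = g x} = (\<Union>c. (f -` {c} \<inter> space M) \<inter> (g -` {c} \<inter> space M))"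
    by auto
  also have "\<dots> \<in> sets M"
    using measurable_sets[OF f] measurable_sets[OF g] by (intro sets.countable_UN') auto
  finally show ?thesis .
qed

lemma sigma_sets_Int_closed:
  assumes "G \<subseteq> Pow \<Omega>" "a \<in> sigma_sets \<Omega> G" "b \<in> sigma_sets \<Omega> G"
  shows "a \<inter> b \<in> sigma_sets \<Omega> G"
proof -
  interpret sigma_algebra \<Omega> "sigma_sets \<Omega> G"
    using assms(1) by (rule sigma_algebra_sigma_sets)
  show ?thesis using assms(2,3) by blast
qed

locale pose_model = prob_space M
  for M :: "'a measure"
    and C :: "nat \<Rightarrow> 'a \<Rightarrow> nat"
    and omega :: "nat \<Rightarrow> 'a \<Rightarrow> nat \<Rightarrow> real"
    and R :: "nat \<Rightarrow> nat \<Rightarrow> 'a \<Rightarrow> nat"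
    and theta :: "nat \<Rightarrow> 'a \<Rightarrow> 'b::polish_space"
    and H :: "'b measure"
    and j j' :: nat
    and \<mu> :: "(nat \<Rightarrow> real) measure" +
  assumes C_meas: "\<And>c. C c \<in> measurable M (count_space UNIV)"
    and omega_meas: "\<And>k. omega k \<in> measurable M omega_space"
    and R_meas: "\<And>r k. R r k \<in> measurable M (count_space UNIV)"
    and theta_meas: "\<And>l. theta l \<in> borel_measurable M"
    and R_given_omega:
      "\<And>k I ls A. finite I \<Longrightarrow> A \<in> sets omega_space \<Longrightarrow>
         measure M {x \<in> space M. omega k x \<in> A \<and> (\<forall>r\<in>I. R r k x = ls r)}
         = integral\<^sup>L M (\<lambda>x. indicator A (omega k x) * (\<Prod>r\<in>I. omega k x (ls r)))"
    and theta_law: "\<And>l. distr M borel (theta l) = H"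
    and H_diffuse: "\<And>y. emeasure H {y} = 0"
    and indep: "indep_sets (model_blocks M C j j' omega R theta) UNIV"
    and omega_law: "\<And>k. distr M omega_space (omega k) = \<mu>"
begin

declare C_meas[measurable] omega_meas[measurable] R_meas[measurable] theta_meas[measurable]

abbreviation "label_block \<equiv> model_blocks M C j j' omega R theta (Inl ())"
abbreviation "cluster_block k \<equiv> model_blocks M C j j' omega R theta (Inr (Inl k))"

lemma blocks_subset_events: "model_blocks M C j j' omega R theta b \<subseteq> events"
  using conjunct1[OF indep[unfolded indep_sets_def]] by blast

lemma label_pair_in_label_block: "{x \<in> space M. C j x = k \<and> C j' x = k'} \<in> label_block"
proof -
  let ?G = "{C j -` A \<inter> space M | A. True} \<union> {C j' -` A \<inter> space M | A. True}"
  have "C j -` {k} \<inter> space M \<in> sigma_sets (space M) ?G" "C j' -` {k'} \<inter> space M \<in> sigma_sets (space M) ?G"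
    by (blast intro: sigma_sets.Basic)+
  then have "(C j -` {k} \<inter> space M) \<inter> (C j' -` {k'} \<inter> space M) \<in> sigma_sets (space M) ?G"
    by (rule sigma_sets_Int_closed[rotated]) auto
  moreover have "{x \<in> space M. C j x = k \<and> C j' x = k'} = (C j -` {k} \<inter> space M) \<inter> (C j' -` {k'} \<inter> space M)"
    by auto
  ultimately show ?thesis by (simp add: model_blocks_def)
qed

lemma row_label_in_cluster_block: "{x \<in> space M. R r k x = l} \<in> cluster_block k"
proof -
  have "{x \<in> space M. R r k x = l} = R r k -` {l} \<inter> space M" by auto
  then show ?thesis by (auto simp: model_blocks_def intro!: sigma_sets.Basic)
qed

lemma row_tie_in_cluster_block: "{x \<in> space M. R r k x = R r' k x} \<in> cluster_block k"
proof -
  have "{x \<in> space M. R r k x = l \<and> R r' k x = l}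
      = {x \<in> space M. R r k x = l} \<inter> {x \<in> space M. R r' k x = l}" for l
    by auto
  then have "{x \<in> space M. R r k x = l \<and> R r' k x = l} \<in> cluster_block k" for l
    using row_label_in_cluster_block[of r k l] row_label_in_cluster_block[of r' k l]
    by (auto simp: model_blocks_def intro!: sigma_sets_Int_closed)
  moreover have "{x \<in> space M. R r k x = R r' k x} = (\<Union>l. {x \<in> space M. R r k x = l \<and> R r' k x = l})"
    by auto
  ultimately show ?thesis by (auto simp: model_blocks_def intro!: sigma_sets.Union)
qed

lemma prob_Int_label_cluster:
  assumes "a \<in> label_block" "b \<in> cluster_block k"
  shows "prob (a \<inter> b) = prob a * prob b"
  using indep_setsD[OF indep, of "{Inl (), Inr (Inl k)}" "\<lambda>z. if z = Inl () then a else b"] assms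
  by (simp add: Int_commute)

lemma prob_Int_label_two_clusters:
  assumes "a \<in> label_block" "b \<in> cluster_block k" "c \<in> cluster_block k'" "k \<noteq> k'"
  shows "prob (a \<inter> b \<inter> c) = prob a * prob b * prob c"
  using indep_setsD[OF indep, of "{Inl (), Inr (Inl k), Inr (Inl k')}"
      "\<lambda>z. if z = Inl () then a else if z = Inr (Inl k) then b else c"] assms
  by (simp add: Int_ac mult_ac)

lemma integral_omega:
  fixes f :: "(nat \<Rightarrow> real) \<Rightarrow> real"
  assumes "f \<in> borel_measurable omega_space"
  shows "(\<integral>x. f (omega k x) \<partial>M) = (\<integral>y. f y \<partial>\<mu>)"
  using integral_distr[of "omega k" M omega_space f] assms by (simp add: omega_law)

lemma prob_row_labels_eq:
  assumes "finite I"
  shows "prob {x \<in> space M. \<forall>r\<in>I. R r k x = l} = (\<integral>y. y l ^ card I \<partial>\<mu>)"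
proof -
  have "UNIV \<in> sets omega_space"
    using sets.top[of omega_space] by (simp add: omega_space_def space_PiM)
  then have "prob {x \<in> space M. omega k x \<in> UNIV \<and> (\<forall>r\<in>I. R r k x = l)} = (\<integral>x. omega k x l ^ card I \<partial>M)"
    using R_given_omega[OF assms, of UNIV k "\<lambda>_. l"] by simp
  also have "\<dots> = (\<integral>y. y l ^ card I \<partial>\<mu>)"
    by (rule integral_omega) (simp add: omega_space_def)
  finally show ?thesis by simp
qed

lemma prob_row_label: "prob {x \<in> space M. R r k x = l} = (\<integral>y. y l \<partial>\<mu>)"
  using prob_row_labels_eq[of "{r}" k l] by simp

lemma prob_row_tie:
  "prob {x \<in> space M. R r k x = R r' k x} = (if r = r' then 1 else \<Sum>l. \<integral>y. y l ^ 2 \<partial>\<mu>)"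
proof (cases "r = r'")
  case False
  have "(\<lambda>l. prob {x \<in> space M. R r k x = l \<and> R r' k x = l})
      sums prob (\<Union>l. {x \<in> space M. R r k x = l \<and> R r' k x = l})"
    by (intro finite_measure_UNION) (auto simp: disjoint_family_on_def)
  moreover have "(\<Union>l. {x \<in> space M. R r k x = l \<and> R r' k x = l}) = {x \<in> space M. R r k x = R r' k x}"
    by auto
  moreover have "prob {x \<in> space M. R r k x = l \<and> R r' k x = l} = (\<integral>y. y l ^ 2 \<partial>\<mu>)" for l
    using prob_row_labels_eq[of "{r, r'}" k l] False by (simp add: power2_eq_square)
  ultimately show ?thesis using False by (simp add: sums_iff)
qed (simp add: prob_space)

lemma cross_cluster_tie_sums:
  assumes a: "a \<in> label_block" and kk': "k \<noteq> k'"
  shows "(\<lambda>l. prob a * (\<integral>y. y l \<partial>\<mu>)\<^sup>2) sums prob (a \<inter> {x \<in> space M. R r k x = R r' k' x})"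
proof -
  have a_ev: "a \<in> events"
    using a blocks_subset_events by blast
  have "(\<lambda>l. prob (a \<inter> {x \<in> space M. R r k x = l} \<inter> {x \<in> space M. R r' k' x = l}))
      sums prob (\<Union>l. a \<inter> {x \<in> space M. R r k x = l} \<inter> {x \<in> space M. R r' k' x = l})"
    using a_ev by (intro finite_measure_UNION) (auto simp: disjoint_family_on_def)
  moreover have "(\<Union>l. a \<inter> {x \<in> space M. R r k x = l} \<inter> {x \<in> space M. R r' k' x = l})
      = a \<inter> {x \<in> space M. R r k x = R r' k' x}"
    by auto
  moreover have "prob (a \<inter> {x \<in> space M. R r k x = l} \<inter> {x \<in> space M. R r' k' x = l})
      = prob a * (\<integral>y. y l \<partial>\<mu>)\<^sup>2" for l
    using prob_Int_label_two_clusters[OF a row_label_in_cluster_block row_label_in_cluster_block kk']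
    by (simp add: prob_row_label power2_eq_square)
  ultimately show ?thesis by simp
qed

lemma prob_Int_cross_cluster_tie:
  assumes "a \<in> label_block" and "k \<noteq> k'"
  shows "prob (a \<inter> {x \<in> space M. R r k x = R r' k' x}) = prob a * (\<Sum>l. (\<integral>y. y l \<partial>\<mu>)\<^sup>2)"
proof -
  have "space M \<in> label_block" by (simp add: model_blocks_def sigma_sets_top)
  from cross_cluster_tie_sums[OF this zero_neq_one, of r r']
  have "summable (\<lambda>l. prob (space M) * (\<integral>y. y l \<partial>\<mu>)\<^sup>2)"
    by (rule sums_summable)
  then have "summable (\<lambda>l. (\<integral>y. y l \<partial>\<mu>)\<^sup>2)"
    by (simp add: prob_space)
  then have "(\<lambda>l. prob a * (\<integral>y. y l \<partial>\<mu>)\<^sup>2) sums (prob a * (\<Sum>l. (\<integral>y. y l \<partial>\<mu>)\<^sup>2))"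
    by (intro sums_mult summable_sums)
  then show ?thesis by (rule sums_unique2[OF cross_cluster_tie_sums[OF assms]])
qed

lemma indep_var_atoms:
  assumes "l \<noteq> m"
  shows "indep_var borel (theta l) borel (theta m)"
proof -
  let ?S = "\<lambda>l. {theta l -` A \<inter> space M | A. A \<in> sets borel}"
  have "prob (a \<inter> b) = prob a * prob b" if "a \<in> ?S l" "b \<in> ?S m" for a b
    using indep_setsD[OF indep, of "{Inr (Inr l), Inr (Inr m)}" "\<lambda>z. if z = Inr (Inr l) then a else b"]
      that assms
    by (simp add: model_blocks_def Int_commute)
  then have "indep_set (?S l) (?S m)"
    unfolding indep_sets2_eq by (auto simp: measurable_sets)
  moreover have "Int_stable (?S l)" for l
  proof (rule Int_stableI)
    fix a b assume "a \<in> ?S l" "b \<in> ?S l"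
    then obtain A B where "A \<in> sets borel" "B \<in> sets borel"
      and "a = theta l -` A \<inter> space M" "b = theta l -` B \<inter> space M"
      by blast
    then show "a \<inter> b \<in> ?S l" by (intro CollectI exI[of _ "A \<inter> B"]) auto
  qed
  ultimately show ?thesis
    unfolding indep_var_eq by (auto intro: indep_set_sigma_sets)
qed

lemma AE_atoms_distinct: "AE x in M. \<forall>l m. l \<noteq> m \<longrightarrow> theta l x \<noteq> theta m x"
proof -
  have "prob {x \<in> space M. theta l x = theta m x} = 0" if "l \<noteq> m" for l m
    using indep_var_atoms[OF that] by (rule prob_eq_zero_if_indep_diffuse) (simp add: theta_law H_diffuse)
  moreover have "{x \<in> space M. theta l x = theta m x} \<in> events" for l m
    by measurable
  ultimately have "AE x in M. theta l x \<noteq> theta m x" if "l \<noteq> m" for l m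
    using that by (subst AE_iff_measurable[OF _ refl]) (auto simp: emeasure_eq_measure)
  then show ?thesis by (auto simp: AE_all_countable)
qed

lemma row_label_of_cluster_measurable:
  "(\<lambda>x. R r (C c x) x) \<in> measurable M (count_space UNIV)"
  by (rule measurable_compose_countable'[where f = "\<lambda>k x. R r k x" and I = UNIV]) auto

lemma prob_row_tie_on_label_pairs:
  assumes c: "0 \<le> c"
    and frac: "\<And>k k'. (k, k') \<in> I \<Longrightarrow>
      prob ({x \<in> space M. C j x = k \<and> C j' x = k'} \<inter> {x \<in> space M. R i k x = R i' k' x})
      = c * prob {x \<in> space M. C j x = k \<and> C j' x = k'}"
  shows "prob {x \<in> space M. R i (C j x) x = R i' (C j' x) x \<and> (C j x, C j' x) \<in> I}
         = c * prob {x \<in> space M. (C j x, C j' x) \<in> I}"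
proof -
  define A where "A = (\<lambda>(k, k'). {x \<in> space M. C j x = k \<and> C j' x = k'})"
  define B where "B = (\<lambda>(k, k'). {x \<in> space M. R i k x = R i' k' x})"
  have "A kk \<in> events" for kk
    using label_pair_in_label_block blocks_subset_events by (auto simp: A_def split: prod.split)
  moreover have "B kk \<in> events" for kk
    using sets_Collect_eq_count_space[OF R_meas R_meas] by (simp add: B_def split: prod.split)
  moreover have "disjoint_family_on A I"
    by (auto simp: disjoint_family_on_def A_def)
  ultimately have "prob (\<Union>kk\<in>I. A kk \<inter> B kk) = c * prob (\<Union>kk\<in>I. A kk)"
    using frac by (intro prob_UN_Int_const_fraction[OF countableI_type _ _ _ c]) (auto simp: A_def B_def)
  moreover have "(\<Union>kk\<in>I. A kk \<inter> B kk) = {x \<in> space M. R i (C j x) x = R i' (C j' x) x \<and> (C j x, C j' x) \<in> I}"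
    and "(\<Union>kk\<in>I. A kk) = {x \<in> space M. (C j x, C j' x) \<in> I}"
    by (auto simp: A_def B_def)
  ultimately show ?thesis by simp
qed

lemma prob_row_label_tie:
  "prob {x \<in> space M. R i (C j x) x = R i' (C j' x) x}
   = prob {x \<in> space M. C j x = C j' x} * (if i = i' then 1 else \<Sum>l. \<integral>y. y l ^ 2 \<partial>\<mu>)
     + (1 - prob {x \<in> space M. C j x = C j' x}) * (\<Sum>l. (\<integral>y. y l \<partial>\<mu>)\<^sup>2)"
    (is "prob ?F = prob ?T * ?q + (1 - prob ?T) * ?p")
proof -
  have "?q = prob {x \<in> space M. R i 0 x = R i' 0 x}"
    by (simp add: prob_row_tie)
  then have q_nonneg: "0 \<le> ?q" by simp
  have "prob (?F \<inter> ?T)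
      = prob {x \<in> space M. R i (C j x) x = R i' (C j' x) x \<and> (C j x, C j' x) \<in> {(k, k'). k = k'}}"
    by (rule arg_cong[where f = prob]) auto
  also have "\<dots> = ?q * prob {x \<in> space M. (C j x, C j' x) \<in> {(k, k'). k = k'}}"
    using prob_Int_label_cluster[OF label_pair_in_label_block row_tie_in_cluster_block]
    by (intro prob_row_tie_on_label_pairs[OF q_nonneg]) (auto simp: prob_row_tie)
  also have "{x \<in> space M. (C j x, C j' x) \<in> {(k, k'). k = k'}} = ?T"
    by auto
  finally have same: "prob (?F \<inter> ?T) = ?q * prob ?T" .
  have "?p = prob (space M \<inter> {x \<in> space M. R i 0 x = R i' 1 x})"
    using prob_Int_cross_cluster_tie[of "space M" 0 1 i i']
    by (simp add: model_blocks_def sigma_sets_top prob_space)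
  then have p_nonneg: "0 \<le> ?p" by simp
  have T_ev: "?T \<in> events" by (intro sets_Collect_eq_count_space C_meas)
  have "prob (?F - ?T)
      = prob {x \<in> space M. R i (C j x) x = R i' (C j' x) x \<and> (C j x, C j' x) \<in> {(k, k'). k \<noteq> k'}}"
    by (rule arg_cong[where f = prob]) auto
  also have "\<dots> = ?p * prob {x \<in> space M. (C j x, C j' x) \<in> {(k, k'). k \<noteq> k'}}"
    using prob_Int_cross_cluster_tie[OF label_pair_in_label_block]
    by (intro prob_row_tie_on_label_pairs[OF p_nonneg]) (auto simp: mult.commute)
  also have "{x \<in> space M. (C j x, C j' x) \<in> {(k, k'). k \<noteq> k'}} = space M - ?T"
    by auto
  finally have different: "prob (?F - ?T) = ?p * (1 - prob ?T)"
    using prob_compl[OF T_ev] by simp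
  have "?F \<in> events"
    by (intro sets_Collect_eq_count_space row_label_of_cluster_measurable)
  then have "prob ?F = prob (?F \<inter> ?T) + prob (?F - ?T)"
    using T_ev by (subst finite_measure_Union[symmetric]) (auto intro!: arg_cong[where f = prob])
  then show ?thesis using same different by (simp add: mult.commute)
qed

theorem prob_atom_tie:
  "prob {x \<in> space M. theta (R i (C j x) x) x = theta (R i' (C j' x) x) x}
   = prob {x \<in> space M. C j x = C j' x} * (if i = i' then 1 else \<Sum>l. \<integral>y. y l ^ 2 \<partial>\<mu>)
     + (1 - prob {x \<in> space M. C j x = C j' x}) * (\<Sum>l. (\<integral>y. y l \<partial>\<mu>)\<^sup>2)"
proof -
  have atom_measurable: "(\<lambda>x. theta (R r (C c x) x) x) \<in> borel_measurable M" for r c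
    by (rule measurable_compose_countable'[where f = "\<lambda>l x. theta l x" and I = UNIV,
          OF _ row_label_of_cluster_measurable]) auto
  have "{x \<in> space M. theta (R i (C j x) x) x = theta (R i' (C j' x) x) x} \<in> events"
    by (rule measurable_equality_set[OF atom_measurable atom_measurable])
  moreover have "{x \<in> space M. R i (C j x) x = R i' (C j' x) x} \<in> events"
    by (intro sets_Collect_eq_count_space row_label_of_cluster_measurable)
  ultimately have "prob {x \<in> space M. theta (R i (C j x) x) x = theta (R i' (C j' x) x) x}
      = prob {x \<in> space M. R i (C j x) x = R i' (C j' x) x}"
    using AE_atoms_distinct by (intro measure_eq_AE) (auto elim!: eventually_mono)
  then show ?thesis by (simp add: prob_row_label_tie)
qed

end

lemma mixture_divide_sum:
  fixes a e p q :: real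
  assumes "0 < a" "0 < e"
  shows "e / (a + e) * q + (1 - e / (a + e)) * p = 1 / (a + e) * (e * q + a * p)"
proof -
  have "a + e \<noteq> 0" using assms by linarith
  then have complement: "1 - e / (a + e) = a / (a + e)" by (simp add: field_simps)
  show ?thesis unfolding complement by (simp add: divide_inverse algebra_simps)
qed

theorem proposition1:
  fixes M :: "'a measure"
    and C :: "nat \<Rightarrow> 'a \<Rightarrow> nat"
    and omega :: "nat \<Rightarrow> 'a \<Rightarrow> nat \<Rightarrow> real"
    and R :: "nat \<Rightarrow> nat \<Rightarrow> 'a \<Rightarrow> nat"
    and theta :: "nat \<Rightarrow> 'a \<Rightarrow> 'b::polish_space"
    and H :: "'b measure"
    and L :: nat and b0 \<alpha> \<beta> \<nu> :: real
    and j j' i i' :: nat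
  assumes M: "prob_space M"
    and L: "1 \<le> L" and b0: "0 < b0" and alpha: "0 < \<alpha>" and beta: "0 \<le> \<beta>" and nu: "0 < \<nu>"
    and jj': "j \<noteq> j'"
    and C_meas: "\<And>c. C c \<in> measurable M (count_space UNIV)"
    and omega_meas: "\<And>k. omega k \<in> measurable M omega_space"
    and R_meas: "\<And>r k. R r k \<in> measurable M (count_space UNIV)"
    and theta_meas: "\<And>l. theta l \<in> borel_measurable M"
    and tie: "measure M {x \<in> space M. C j x = C j' x} = exp \<beta> / (\<alpha> + exp \<beta>)"
    and R_given_omega:
      "\<And>k I ls A. finite I \<Longrightarrow> A \<in> sets omega_space \<Longrightarrow>
         measure M {x \<in> space M. omega k x \<in> A \<and> (\<forall>r\<in>I. R r k x = ls r)}
         = integral\<^sup>L M (\<lambda>x. indicator A (omega k x) * (\<Prod>r\<in>I. omega k x (ls r)))"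
    and theta_law: "\<And>l. distr M borel (theta l) = H"
    and H_diffuse: "\<And>y. emeasure H {y} = 0"
    and indep: "prob_space.indep_sets M (model_blocks M C j j' omega R theta) UNIV"
  shows "((\<forall>k. distr M omega_space (omega k) = dirichlet_measure L b0) \<longrightarrow>
           measure M {x \<in> space M. theta (R i (C j x) x) x = theta (R i' (C j' x) x) x}
           = 1 / (\<alpha> + exp \<beta>) *
             (exp \<beta> * ((1 + b0) / (1 + real L * b0)) ^ (1 - (if i = i' then 1 else 0))
              + \<alpha> / real L))
       \<and> ((\<forall>k. distr M omega_space (omega k) = gem_measure \<nu>) \<longrightarrow>
           measure M {x \<in> space M. theta (R i (C j x) x) x = theta (R i' (C j' x) x) x}
           = 1 / (\<alpha> + exp \<beta>) *
             (exp \<beta> * (1 / (1 + \<nu>)) ^ (1 - (if i = i' then 1 else 0))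
              + \<alpha> / (2 * \<nu> + 1)))"
proof -
  have atom_tie: "measure M {x \<in> space M. theta (R i (C j x) x) x = theta (R i' (C j' x) x) x}
      = exp \<beta> / (\<alpha> + exp \<beta>) * (if i = i' then 1 else \<Sum>l. \<integral>y. y l ^ 2 \<partial>\<mu>)
        + (1 - exp \<beta> / (\<alpha> + exp \<beta>)) * (\<Sum>l. (\<integral>y. y l \<partial>\<mu>)\<^sup>2)"
    if "\<forall>k. distr M omega_space (omega k) = \<mu>" for \<mu>
  proof -
    interpret pose_model M C omega R theta H j j' \<mu>
      using M C_meas omega_meas R_meas theta_meas R_given_omega theta_law H_diffuse indep that
      by (simp add: pose_model_def pose_model_axioms_def)
    show ?thesis using prob_atom_tie by (simp add: tie)
  qed
  have indicator_exponent: "x ^ (1 - (if i = i' then 1 else 0)) = (if i = i' then 1 else x)" for x :: real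
    by simp
  show ?thesis
    apply (intro conjI impI)
    subgoal premises law
      unfolding atom_tie[OF law] mixture_divide_sum[OF alpha exp_gt_zero] indicator_exponent
        dirichlet_sums_squared_means[OF b0 L, THEN sums_unique, symmetric]
        dirichlet_sums_second_moments[OF b0 L, THEN sums_unique, symmetric]
      by simp
    subgoal premises law
      unfolding atom_tie[OF law] mixture_divide_sum[OF alpha exp_gt_zero] indicator_exponent
        gem_sums_squared_means[OF nu, THEN sums_unique, symmetric]
        gem_sums_second_moments[OF nu, THEN sums_unique, symmetric]
      by simp
    done
qed

end
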